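(* Let $\alpha\in(0,1]$, let $J$ be a real symmetric $n\times n$ matrix with $J_{ii}=0$ and $\|J\|_{1\to1}=\max_i\sum_j|J_{ij}|\le1-\alpha$, let $h\in\mathbb{R}^n$, and let $q^n$ be the Ising measure on $\{-1,+1\}^n$ proportional to $\exp(\frac12\sum_{i,j}J_{ij}\sigma_i\sigma_j+\sum_ih_i\sigma_i)$. Then the coupling matrix $A$ of $q^n$ satisfies $\|A\|_{2\to2}\le\|J\|_{1\to1}\le1-\alpha$. Moreover, if $\|h\|_\infty\le\tilde\alpha$ for some $\tilde\alpha\ge0$, then there exist $c_{\alpha,\tilde\alpha},C_{\alpha,\tilde\alpha}>0$ depending only on $\alpha$ and $\tilde\alpha$ such that $q_i(s\mid\overline{\sigma_i})\in(c_{\alpha,\tilde\alpha},1-C_{\alpha,\tilde\alpha})$ for all $s\in\{-1,+1\}$, all $i$, all $n$ and all $\overline{\sigma_i}$.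
   Context: For $\sigma\in\{-1,+1\}^n$, $\overline{\sigma_i}=(\sigma_j)_{j\ne i}$ and $q_i(\cdot\mid\overline{\sigma_i})$ is the conditional law of the $i$-th spin given $\overline{\sigma_i}$ under $q^n$. The coupling matrix $A=(A_{ik})$ is defined by $A_{ii}=0$ and, for $i\ne k$, $A_{ik}=\sup\{d_{TV}(q_i(\cdot\mid\overline{x_i}),q_i(\cdot\mid\overline{z_i})):x,z\in\{-1,+1\}^n,\ \overline{x_k}=\overline{z_k}\}$, where $d_{TV}$ is total variation distance. $\|A\|_{2\to2}$ is the Euclidean operator norm. *)

theory Defs
  imports "HOL-Analysis.Analysis"
begin

text \<open>Spin configurations on n sites: sites are 0..n-1, spins are real numbers
  in {-1,+1}; components outside the sites are fixed to 0 so the set is finite.\<close>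
definition configs :: "nat \<Rightarrow> (nat \<Rightarrow> real) set" where
  "configs n = {\<sigma>. (\<forall>i<n. \<sigma> i = 1 \<or> \<sigma> i = -1) \<and> (\<forall>i\<ge>n. \<sigma> i = 0)}"

definition ising_weight :: "nat \<Rightarrow> (nat \<Rightarrow> nat \<Rightarrow> real) \<Rightarrow> (nat \<Rightarrow> real) \<Rightarrow> (nat \<Rightarrow> real) \<Rightarrow> real" where
  "ising_weight n J h \<sigma> =
     exp ((1/2) * (\<Sum>i<n. \<Sum>j<n. J i j * \<sigma> i * \<sigma> j) + (\<Sum>i<n. h i * \<sigma> i))"

definition ising_prob :: "nat \<Rightarrow> (nat \<Rightarrow> nat \<Rightarrow> real) \<Rightarrow> (nat \<Rightarrow> real) \<Rightarrow> (nat \<Rightarrow> real) \<Rightarrow> real" where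
  "ising_prob n J h \<sigma> = ising_weight n J h \<sigma> / (\<Sum>\<tau>\<in>configs n. ising_weight n J h \<tau>)"

text \<open>Conditional law q_i(s | overline sigma_i): probability of the configuration
  with spin s at site i and the other spins of sigma, divided by the probability
  of the event that all spins other than i agree with sigma.\<close>
definition cond_law :: "nat \<Rightarrow> (nat \<Rightarrow> nat \<Rightarrow> real) \<Rightarrow> (nat \<Rightarrow> real) \<Rightarrow> nat \<Rightarrow> (nat \<Rightarrow> real) \<Rightarrow> real \<Rightarrow> real" where
  "cond_law n J h i \<sigma> s =
     ising_prob n J h (\<sigma>(i := s)) /
     (ising_prob n J h (\<sigma>(i := 1)) + ising_prob n J h (\<sigma>(i := -1)))"

definition dTV_pm :: "(real \<Rightarrow> real) \<Rightarrow> (real \<Rightarrow> real) \<Rightarrow> real" where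
  "dTV_pm p q = (1/2) * (\<bar>p 1 - q 1\<bar> + \<bar>p (-1) - q (-1)\<bar>)"

definition coupling :: "nat \<Rightarrow> (nat \<Rightarrow> nat \<Rightarrow> real) \<Rightarrow> (nat \<Rightarrow> real) \<Rightarrow> nat \<Rightarrow> nat \<Rightarrow> real" where
  "coupling n J h i k =
     (if i = k then 0 else
      Sup {dTV_pm (cond_law n J h i x) (cond_law n J h i z) | x z.
             x \<in> configs n \<and> z \<in> configs n \<and> (\<forall>j. j \<noteq> k \<longrightarrow> x j = z j)})"

definition opnorm22 :: "nat \<Rightarrow> (nat \<Rightarrow> nat \<Rightarrow> real) \<Rightarrow> real" where
  "opnorm22 n A = Sup {sqrt (\<Sum>i<n. (\<Sum>k<n. A i k * x k)^2) | x. (\<Sum>k<n. (x k)^2) \<le> 1}"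

definition norm11 :: "nat \<Rightarrow> (nat \<Rightarrow> nat \<Rightarrow> real) \<Rightarrow> real" where
  "norm11 n J = Max ({0} \<union> {(\<Sum>j<n. \<bar>J i j\<bar>) | i. i < n})"

end

theory Submission
  imports Defs
begin

text \<open>Resampling spin i of the Ising measure gives the logistic law
  q_i(s | \<sigma>) = (1 + s tanh m_i(\<sigma>)) / 2, where the local field
  m_i(\<sigma>) = \<Sum>_{j \<noteq> i} J_ij \<sigma>_j + h_i satisfies |m_i| \<le> \<parallel>J\<parallel>_{1\<rightarrow>1} + |h_i|.
  Since tanh is 1-Lipschitz and flipping spin k moves m_i by at most 2|J_ik|,
  the coupling matrix is dominated entrywise by |J|; the Schur test for the
  symmetric matrix |J| then bounds \<parallel>A\<parallel>_{2\<rightarrow>2} by the maximal row sum of |J|.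
  The bound on |m_i| keeps tanh m_i uniformly away from \<plusminus>1, which gives the
  bounds on the conditional laws.\<close>

lemma configs_Suc_subset:
  "configs (Suc n) \<subseteq> (\<lambda>(\<sigma>, b). \<sigma>(n := b)) ` (configs n \<times> {1, -1})"
proof
  fix \<sigma> assume \<sigma>: "\<sigma> \<in> configs (Suc n)"
  have "\<sigma>(n := 0) \<in> configs n" "\<sigma> n \<in> {1, -1}" "\<sigma> = (\<sigma>(n := 0))(n := \<sigma> n)"
    using \<sigma> unfolding configs_def by auto
  then show "\<sigma> \<in> (\<lambda>(\<sigma>, b). \<sigma>(n := b)) ` (configs n \<times> {1, -1})"
    by (intro image_eqI[where x = "(\<sigma>(n := 0), \<sigma> n)"]) auto
qed

lemma finite_configs: "finite (configs n)"
proof (induction n)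
  case 0
  have "configs 0 \<subseteq> {\<lambda>_. 0}" unfolding configs_def by auto
  then show ?case using finite_subset by blast
next
  case (Suc n)
  then show ?case using configs_Suc_subset finite_subset by blast
qed

lemma all_up_in_configs: "(\<lambda>j. if j < n then 1 else 0) \<in> configs n"
  unfolding configs_def by auto

lemma abs_config_le_1: "\<sigma> \<in> configs n \<Longrightarrow> \<bar>\<sigma> j\<bar> \<le> 1"
  unfolding configs_def by (cases "j < n") auto

lemma partition_function_pos: "0 < (\<Sum>\<tau>\<in>configs n. ising_weight n J h \<tau>)"
  using finite_configs all_up_in_configs by (intro sum_pos) (auto simp: ising_weight_def)

subsection \<open>The conditional law is logistic in the local field\<close>

definition local_field ::
  "nat \<Rightarrow> (nat \<Rightarrow> nat \<Rightarrow> real) \<Rightarrow> (nat \<Rightarrow> real) \<Rightarrow> nat \<Rightarrow> (nat \<Rightarrow> real) \<Rightarrow> real" where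
  "local_field n J h i \<sigma> = (\<Sum>j\<in>{..<n} - {i}. J i j * \<sigma> j) + h i"

lemma quadratic_form_update:
  fixes J :: "nat \<Rightarrow> nat \<Rightarrow> real"
  assumes "i < n" "J i i = 0" "\<forall>j<n. J j i = J i j"
  shows "(\<Sum>a<n. \<Sum>b<n. J a b * (\<sigma>(i := s)) a * (\<sigma>(i := s)) b) =
     (\<Sum>a\<in>{..<n} - {i}. \<Sum>b\<in>{..<n} - {i}. J a b * \<sigma> a * \<sigma> b)
       + 2 * s * (\<Sum>b\<in>{..<n} - {i}. J i b * \<sigma> b)"
proof -
  have fin: "finite {..<n}" "i \<in> {..<n}" using assms(1) by auto
  define t where "t = \<sigma>(i := s)"
  have t_i: "t i = s" and t_other: "\<And>b. b \<noteq> i \<Longrightarrow> t b = \<sigma> b" unfolding t_def by auto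
  have row: "(\<Sum>b<n. J a b * t a * t b) = J a i * t a * s + (\<Sum>b\<in>{..<n} - {i}. J a b * t a * \<sigma> b)"
    for a
    using sum.remove[OF fin, of "\<lambda>b. J a b * t a * t b"] by (simp add: t_i t_other)
  have "(\<Sum>a<n. \<Sum>b<n. J a b * t a * t b)
      = (\<Sum>b<n. J i b * t i * t b) + (\<Sum>a\<in>{..<n} - {i}. \<Sum>b<n. J a b * t a * t b)"
    by (rule sum.remove[OF fin])
  also have "(\<Sum>b<n. J i b * t i * t b) = s * (\<Sum>b\<in>{..<n} - {i}. J i b * \<sigma> b)"
    unfolding row[of i] by (simp add: t_i assms(2) sum_distrib_left mult_ac)
  also have "(\<Sum>a\<in>{..<n} - {i}. \<Sum>b<n. J a b * t a * t b) =
      (\<Sum>a\<in>{..<n} - {i}. J a i * \<sigma> a * s) + (\<Sum>a\<in>{..<n} - {i}. \<Sum>b\<in>{..<n} - {i}. J a b * \<sigma> a * \<sigma> b)"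
    unfolding row sum.distrib[symmetric] by (rule sum.cong) (simp_all add: t_other)
  also have "(\<Sum>a\<in>{..<n} - {i}. J a i * \<sigma> a * s) = s * (\<Sum>b\<in>{..<n} - {i}. J i b * \<sigma> b)"
    unfolding sum_distrib_left by (rule sum.cong) (simp_all add: assms(3))
  finally show ?thesis unfolding t_def by simp
qed

lemma linear_form_update:
  fixes h :: "nat \<Rightarrow> real"
  assumes "i < n"
  shows "(\<Sum>a<n. h a * (\<sigma>(i := s)) a) = h i * s + (\<Sum>a\<in>{..<n} - {i}. h a * \<sigma> a)"
proof -
  have "finite {..<n}" "i \<in> {..<n}" using assms by auto
  from sum.remove[OF this, of "\<lambda>a. h a * (\<sigma>(i := s)) a"] show ?thesis
    by (auto intro!: sum.cong)
qed

lemma ising_weight_update: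
  assumes "i < n" "J i i = 0" "\<forall>j<n. J j i = J i j"
  shows "ising_weight n J h (\<sigma>(i := s)) =
           ising_weight n J h (\<sigma>(i := 0)) * exp (s * local_field n J h i \<sigma>)"
proof -
  define Q where "Q = (\<Sum>a\<in>{..<n} - {i}. \<Sum>b\<in>{..<n} - {i}. J a b * \<sigma> a * \<sigma> b)"
  define L where "L = (\<Sum>a\<in>{..<n} - {i}. h a * \<sigma> a)"
  define M where "M = (\<Sum>b\<in>{..<n} - {i}. J i b * \<sigma> b)"
  have weight: "ising_weight n J h (\<sigma>(i := t)) = exp (Q / 2 + L + t * (M + h i))" for t
    unfolding ising_weight_def quadratic_form_update[OF assms] linear_form_update[OF assms(1), of h]
      Q_def[symmetric] L_def[symmetric] M_def[symmetric]
    by (simp add: algebra_simps)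
  show ?thesis
    unfolding weight local_field_def M_def[symmetric] by (simp add: exp_add[symmetric])
qed

lemma cond_law_logistic:
  fixes h \<sigma> :: "nat \<Rightarrow> real"
  assumes "i < n" "J i i = 0" "\<forall>j<n. J j i = J i j"
  defines "m \<equiv> local_field n J h i \<sigma>"
  shows "cond_law n J h i \<sigma> s = exp (s * m) / (exp m + exp (- m))"
proof -
  let ?Z = "\<Sum>\<tau>\<in>configs n. ising_weight n J h \<tau>"
  define E where "E = ising_weight n J h (\<sigma>(i := 0)) / ?Z"
  have "E > 0" unfolding E_def using partition_function_pos by (simp add: ising_weight_def)
  have prob: "ising_prob n J h (\<sigma>(i := t)) = E * exp (t * m)" for t
    unfolding ising_prob_def ising_weight_update[OF assms(1-3), where s = t] E_def m_def by simp
  have "ising_prob n J h (\<sigma>(i := 1)) + ising_prob n J h (\<sigma>(i := -1)) = E * (exp m + exp (- m))"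
    unfolding prob by (simp add: distrib_left)
  then show ?thesis
    unfolding cond_law_def using \<open>E > 0\<close> by (simp add: prob)
qed

lemma logistic_eq_tanh:
  fixes m s :: real
  assumes "s \<in> {1, -1}"
  shows "exp (s * m) / (exp m + exp (- m)) = (1 + s * tanh m) / 2"
proof -
  have "exp m + exp (- m) > 0" by (simp add: add_pos_pos)
  then show ?thesis using assms unfolding tanh_altdef by (auto simp: field_simps)
qed

lemma cond_law_tanh:
  assumes "i < n" "J i i = 0" "\<forall>j<n. J j i = J i j" "s \<in> {1, -1}"
  shows "cond_law n J h i \<sigma> s = (1 + s * tanh (local_field n J h i \<sigma>)) / 2"
  unfolding cond_law_logistic[OF assms(1-3)] using logistic_eq_tanh[OF assms(4)] .

subsection \<open>Entrywise domination of the coupling matrix\<close>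

lemma tanh_lipschitz: "\<bar>tanh a - tanh b\<bar> \<le> \<bar>a - b\<bar>" for a b :: real
proof -
  have deriv: "DERIV tanh x :> 1 - tanh x ^ 2" for x :: real
  proof -
    have "cosh x \<noteq> 0" using cosh_real_pos[of x] by simp
    from has_field_derivative_tanh[of "\<lambda>x. x", OF this DERIV_ident] show ?thesis by simp
  qed
  have increment: "tanh y - tanh x \<le> y - x" if "x < y" for x y :: real
  proof -
    have "continuous_on {x..y} tanh" by (intro continuous_intros) auto
    then obtain z where "tanh y - tanh x = (y - x) * (1 - tanh z ^ 2)"
      using MVT2[OF \<open>x < y\<close>, of tanh "\<lambda>z. 1 - tanh z ^ 2"] deriv by blast
    then show ?thesis using \<open>x < y\<close> by (simp add: mult_left_le)
  qed
  show ?thesis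
    using increment[of a b] increment[of b a] by (cases a b rule: linorder_cases) auto
qed

lemma local_field_flip:
  assumes "k < n" "k \<noteq> i" "\<forall>j. j \<noteq> k \<longrightarrow> x j = z j"
  shows "local_field n J h i x - local_field n J h i z = J i k * (x k - z k)"
proof -
  have "local_field n J h i x - local_field n J h i z = (\<Sum>j\<in>{..<n} - {i}. J i j * (x j - z j))"
    unfolding local_field_def by (simp add: sum_subtractf[symmetric] algebra_simps)
  also have "\<dots> = (\<Sum>j\<in>{..<n} - {i}. if j = k then J i k * (x k - z k) else 0)"
    using assms(3) by (intro sum.cong) auto
  also have "\<dots> = J i k * (x k - z k)" using assms(1,2) by simp
  finally show ?thesis .
qed

lemma dTV_cond_law_flip_le:
  assumes "i < n" "J i i = 0" "\<forall>j<n. J j i = J i j"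
    and "k < n" "k \<noteq> i" "x \<in> configs n" "z \<in> configs n" "\<forall>j. j \<noteq> k \<longrightarrow> x j = z j"
  shows "dTV_pm (cond_law n J h i x) (cond_law n J h i z) \<le> \<bar>J i k\<bar>"
proof -
  define mx where "mx = local_field n J h i x"
  define mz where "mz = local_field n J h i z"
  have "dTV_pm (cond_law n J h i x) (cond_law n J h i z) = \<bar>tanh mx - tanh mz\<bar> / 2"
    unfolding dTV_pm_def mx_def mz_def
    by (simp add: cond_law_tanh[OF assms(1-3)]) (simp add: abs_if field_simps)
  also have "\<dots> \<le> \<bar>mx - mz\<bar> / 2" using tanh_lipschitz[of mx mz] by simp
  also have "mx - mz = J i k * (x k - z k)"
    unfolding mx_def mz_def by (rule local_field_flip[OF assms(4,5,8)])
  also have "\<bar>J i k * (x k - z k)\<bar> / 2 \<le> \<bar>J i k\<bar>"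
  proof -
    have "\<bar>x k - z k\<bar> \<le> 2"
      using abs_config_le_1[OF assms(6), of k] abs_config_le_1[OF assms(7), of k] by linarith
    then show ?thesis by (simp add: abs_mult mult_left_mono)
  qed
  finally show ?thesis .
qed

lemma coupling_abs_le:
  assumes "\<forall>i<n. \<forall>j<n. J i j = J j i" "\<forall>i<n. J i i = 0" "i < n" "k < n"
  shows "\<bar>coupling n J h i k\<bar> \<le> \<bar>J i k\<bar>"
proof (cases "i = k")
  case True
  then show ?thesis by (simp add: coupling_def)
next
  case False
  define S where "S = {dTV_pm (cond_law n J h i x) (cond_law n J h i z) | x z.
      x \<in> configs n \<and> z \<in> configs n \<and> (\<forall>j. j \<noteq> k \<longrightarrow> x j = z j)}"
  have "J i i = 0" "\<forall>j<n. J j i = J i j" using assms by auto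
  have dTV_self: "dTV_pm p p = 0" for p by (simp add: dTV_pm_def)
  obtain x0 where "x0 \<in> configs n" using all_up_in_configs by blast
  then have "dTV_pm (cond_law n J h i x0) (cond_law n J h i x0) \<in> S"
    unfolding S_def by blast
  then have "0 \<in> S" by (simp only: dTV_self)
  have upper: "d \<le> \<bar>J i k\<bar>" if "d \<in> S" for d
  proof -
    from \<open>d \<in> S\<close> obtain x z where "d = dTV_pm (cond_law n J h i x) (cond_law n J h i z)"
      and "x \<in> configs n" "z \<in> configs n" "\<forall>j. j \<noteq> k \<longrightarrow> x j = z j"
      unfolding S_def by blast
    with dTV_cond_law_flip_le[OF \<open>i < n\<close> \<open>J i i = 0\<close> \<open>\<forall>j<n. J j i = J i j\<close> \<open>k < n\<close>]
    show ?thesis using False by simp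
  qed
  then have "bdd_above S" by (rule bdd_aboveI)
  have "0 \<le> Sup S" using cSup_upper[OF \<open>0 \<in> S\<close> \<open>bdd_above S\<close>] .
  moreover have "Sup S \<le> \<bar>J i k\<bar>" using \<open>0 \<in> S\<close> by (intro cSup_least upper) blast
  moreover have "coupling n J h i k = Sup S" unfolding coupling_def S_def by (rule if_not_P[OF False])
  ultimately show ?thesis by linarith
qed

subsection \<open>Schur test\<close>

lemma weighted_Cauchy_Schwarz_row:
  fixes a w x :: "nat \<Rightarrow> real"
  assumes "\<And>k. k < n \<Longrightarrow> \<bar>a k\<bar> \<le> w k"
  shows "(\<Sum>k<n. a k * x k)\<^sup>2 \<le> (\<Sum>k<n. w k) * (\<Sum>k<n. w k * (x k)\<^sup>2)"
proof -
  have w: "k < n \<Longrightarrow> 0 \<le> w k" for k using assms[of k] by linarith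
  have "\<bar>\<Sum>k<n. a k * x k\<bar> \<le> (\<Sum>k<n. sqrt (w k) * (sqrt (w k) * \<bar>x k\<bar>))"
  proof -
    have "\<bar>\<Sum>k<n. a k * x k\<bar> \<le> (\<Sum>k<n. \<bar>a k\<bar> * \<bar>x k\<bar>)"
      using sum_abs[of "\<lambda>k. a k * x k"] by (simp add: abs_mult)
    also have "\<dots> \<le> (\<Sum>k<n. w k * \<bar>x k\<bar>)"
      using assms by (intro sum_mono mult_right_mono) auto
    also have "\<dots> = (\<Sum>k<n. sqrt (w k) * (sqrt (w k) * \<bar>x k\<bar>))"
      using w by (intro sum.cong) (auto simp: mult.assoc[symmetric])
    finally show ?thesis .
  qed
  then have "(\<Sum>k<n. a k * x k)\<^sup>2 \<le> (\<Sum>k<n. sqrt (w k) * (sqrt (w k) * \<bar>x k\<bar>))\<^sup>2"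
    using power_mono[of _ _ 2] by (metis abs_ge_zero power2_abs)
  also have "\<dots> \<le> (\<Sum>k<n. (sqrt (w k))\<^sup>2) * (\<Sum>k<n. (sqrt (w k) * \<bar>x k\<bar>)\<^sup>2)"
    by (rule Cauchy_Schwarz_ineq_sum)
  also have "\<dots> = (\<Sum>k<n. w k) * (\<Sum>k<n. w k * (x k)\<^sup>2)"
    using w by (simp add: power_mult_distrib)
  finally show ?thesis .
qed

text \<open>Symmetry of B is what turns the column sums arising after Cauchy-Schwarz
  back into row sums.\<close>

lemma opnorm22_le_symmetric_dominant:
  fixes A B :: "nat \<Rightarrow> nat \<Rightarrow> real"
  assumes dominated: "\<And>i k. i < n \<Longrightarrow> k < n \<Longrightarrow> \<bar>A i k\<bar> \<le> B i k"
    and symmetric: "\<And>i k. i < n \<Longrightarrow> k < n \<Longrightarrow> B i k = B k i"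
    and row_sum: "\<And>i. i < n \<Longrightarrow> (\<Sum>k<n. B i k) \<le> R" and "0 \<le> R"
  shows "opnorm22 n A \<le> R"
  unfolding opnorm22_def
proof (rule cSup_least)
  show "{sqrt (\<Sum>i<n. (\<Sum>k<n. A i k * x k)\<^sup>2) | x. (\<Sum>k<n. (x k)\<^sup>2) \<le> 1} \<noteq> {}"
    by (auto intro: exI[of _ "\<lambda>_. 0"])
next
  fix v assume "v \<in> {sqrt (\<Sum>i<n. (\<Sum>k<n. A i k * x k)\<^sup>2) | x. (\<Sum>k<n. (x k)\<^sup>2) \<le> 1}"
  then obtain x where v: "v = sqrt (\<Sum>i<n. (\<Sum>k<n. A i k * x k)\<^sup>2)"
    and x: "(\<Sum>k<n. (x k)\<^sup>2) \<le> 1" by blast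
  have B_nonneg: "i < n \<Longrightarrow> k < n \<Longrightarrow> 0 \<le> B i k" for i k using dominated[of i k] by linarith
  have "(\<Sum>i<n. (\<Sum>k<n. A i k * x k)\<^sup>2) \<le> (\<Sum>i<n. R * (\<Sum>k<n. B i k * (x k)\<^sup>2))"
  proof (rule sum_mono)
    fix i assume "i \<in> {..<n}"
    then have "(\<Sum>k<n. A i k * x k)\<^sup>2 \<le> (\<Sum>k<n. B i k) * (\<Sum>k<n. B i k * (x k)\<^sup>2)"
      using dominated by (intro weighted_Cauchy_Schwarz_row) auto
    also have "\<dots> \<le> R * (\<Sum>k<n. B i k * (x k)\<^sup>2)"
      using \<open>i \<in> {..<n}\<close> row_sum B_nonneg by (intro mult_right_mono sum_nonneg) auto
    finally show "(\<Sum>k<n. A i k * x k)\<^sup>2 \<le> R * (\<Sum>k<n. B i k * (x k)\<^sup>2)" .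
  qed
  also have "\<dots> = R * (\<Sum>k<n. \<Sum>i<n. B i k * (x k)\<^sup>2)"
    by (simp only: sum_distrib_left[symmetric] sum.swap[of "\<lambda>i k. B i k * (x k)\<^sup>2"])
  also have "\<dots> = R * (\<Sum>k<n. (x k)\<^sup>2 * (\<Sum>i<n. B k i))"
    using symmetric by (auto simp: sum_distrib_left sum_distrib_right mult.commute intro!: sum.cong)
  also have "\<dots> \<le> R * (\<Sum>k<n. (x k)\<^sup>2 * R)"
    using row_sum \<open>0 \<le> R\<close> by (intro mult_left_mono sum_mono) auto
  also have "\<dots> = R\<^sup>2 * (\<Sum>k<n. (x k)\<^sup>2)"
    by (simp add: sum_distrib_left power2_eq_square mult_ac)
  also have "\<dots> \<le> R\<^sup>2" using x by (simp add: mult_left_le)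
  finally have "v \<le> sqrt (R\<^sup>2)" unfolding v by (rule real_sqrt_le_mono)
  then show "v \<le> R" using \<open>0 \<le> R\<close> by simp
qed

lemma norm11_nonneg: "0 \<le> norm11 n J"
  unfolding norm11_def by (rule Max_ge) auto

lemma row_sum_le_norm11: "i < n \<Longrightarrow> (\<Sum>j<n. \<bar>J i j\<bar>) \<le> norm11 n J"
  unfolding norm11_def by (rule Max_ge) auto

lemma opnorm22_coupling_le_norm11:
  assumes "\<forall>i<n. \<forall>j<n. J i j = J j i" "\<forall>i<n. J i i = 0"
  shows "opnorm22 n (coupling n J h) \<le> norm11 n J"
  using assms coupling_abs_le row_sum_le_norm11 norm11_nonneg
  by (intro opnorm22_le_symmetric_dominant[where B = "\<lambda>i k. \<bar>J i k\<bar>"]) auto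

subsection \<open>Uniform bounds on the conditional laws\<close>

lemma abs_local_field_le:
  fixes J :: "nat \<Rightarrow> nat \<Rightarrow> real"
  assumes "\<sigma> \<in> configs n"
  shows "\<bar>local_field n J h i \<sigma>\<bar> \<le> (\<Sum>j<n. \<bar>J i j\<bar>) + \<bar>h i\<bar>"
proof -
  have "\<bar>\<Sum>j\<in>{..<n} - {i}. J i j * \<sigma> j\<bar> \<le> (\<Sum>j\<in>{..<n} - {i}. \<bar>J i j * \<sigma> j\<bar>)"
    by (rule sum_abs)
  also have "\<dots> \<le> (\<Sum>j\<in>{..<n} - {i}. \<bar>J i j\<bar>)"
    using abs_config_le_1[OF assms] by (intro sum_mono) (simp add: abs_mult mult_left_le)
  also have "\<dots> \<le> (\<Sum>j<n. \<bar>J i j\<bar>)" by (rule sum_mono2) auto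
  finally show ?thesis unfolding local_field_def by linarith
qed

lemma cond_law_bounds:
  assumes "\<forall>i<n. \<forall>j<n. J i j = J j i" "\<forall>i<n. J i i = 0" "i < n" "\<sigma> \<in> configs n" "s \<in> {1, -1}"
    and "norm11 n J + \<bar>h i\<bar> < K"
  shows "(1 - tanh K) / 2 < cond_law n J h i \<sigma> s \<and> cond_law n J h i \<sigma> s < 1 - (1 - tanh K) / 2"
proof -
  define m where "m = local_field n J h i \<sigma>"
  have "\<bar>m\<bar> < K"
    using abs_local_field_le[OF assms(4), of J h i] row_sum_le_norm11[OF assms(3), of J] assms(6)
    unfolding m_def by linarith
  then have "\<bar>tanh m\<bar> < tanh K" by (metis tanh_real_abs tanh_real_less_iff)
  moreover have "\<bar>s * tanh m\<bar> = \<bar>tanh m\<bar>" using assms(5) by auto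
  ultimately have "\<bar>s * tanh m\<bar> < tanh K" by simp
  moreover have "cond_law n J h i \<sigma> s = (1 + s * tanh m) / 2"
    unfolding m_def using assms by (intro cond_law_tanh) auto
  ultimately show ?thesis by (auto simp only: abs_less_iff) (simp_all add: field_simps)
qed

lemma cond_law_uniform_bounds:
  assumes "0 < \<alpha>"
  shows "\<exists>c C. c > 0 \<and> C > 0 \<and>
           (\<forall>n J h.
              (\<forall>i<n. \<forall>j<n. J i j = J j i) \<and> (\<forall>i<n. J i i = 0) \<and> norm11 n J \<le> 1 - \<alpha>
              \<and> (\<forall>i<n. \<bar>h i\<bar> \<le> \<alpha>')
              \<longrightarrow> (\<forall>i<n. \<forall>\<sigma>\<in>configs n. \<forall>s\<in>{1, -1}.
                     c < cond_law n J h i \<sigma> s \<and> cond_law n J h i \<sigma> s < 1 - C))"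
proof -
  define c where "c = (1 - tanh (1 + \<alpha>')) / 2"
  have "c > 0" unfolding c_def using tanh_real_lt_1 by simp
  moreover have "c < cond_law n J h i \<sigma> s \<and> cond_law n J h i \<sigma> s < 1 - c"
    if "(\<forall>i<n. \<forall>j<n. J i j = J j i) \<and> (\<forall>i<n. J i i = 0) \<and> norm11 n J \<le> 1 - \<alpha>
          \<and> (\<forall>i<n. \<bar>h i\<bar> \<le> \<alpha>')" "i < n" "\<sigma> \<in> configs n" "s \<in> {1, -1}"
    for n J h i \<sigma> and s :: real
    unfolding c_def using that \<open>0 < \<alpha>\<close> by (intro cond_law_bounds) auto
  ultimately show ?thesis by (intro exI[of _ c] conjI allI impI ballI) auto
qed

theorem lemma3p1:
  fixes \<alpha> :: real
  assumes "0 < \<alpha>" and "\<alpha> \<le> 1"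
  shows "(\<forall>n J h.
            (\<forall>i<n. \<forall>j<n. J i j = J j i) \<and> (\<forall>i<n. J i i = 0) \<and> norm11 n J \<le> 1 - \<alpha>
            \<longrightarrow> opnorm22 n (coupling n J h) \<le> norm11 n J \<and> norm11 n J \<le> 1 - \<alpha>)
       \<and> (\<forall>\<alpha>'::real. \<alpha>' \<ge> 0 \<longrightarrow>
            (\<exists>c C. c > 0 \<and> C > 0 \<and>
              (\<forall>n J h.
                 (\<forall>i<n. \<forall>j<n. J i j = J j i) \<and> (\<forall>i<n. J i i = 0) \<and> norm11 n J \<le> 1 - \<alpha>
                 \<and> (\<forall>i<n. \<bar>h i\<bar> \<le> \<alpha>')
                 \<longrightarrow> (\<forall>i<n. \<forall>\<sigma>\<in>configs n. \<forall>s\<in>{1, -1}.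
                        c < cond_law n J h i \<sigma> s \<and> cond_law n J h i \<sigma> s < 1 - C))))"
proof (intro conjI allI impI)
  fix n J h
  assume "(\<forall>i<n. \<forall>j<n. J i j = J j i) \<and> (\<forall>i<n. J i i = 0) \<and> norm11 n J \<le> 1 - \<alpha>"
  then show "opnorm22 n (coupling n J h) \<le> norm11 n J" "norm11 n J \<le> 1 - \<alpha>"
    by (simp_all add: opnorm22_coupling_le_norm11)
qed (rule cond_law_uniform_bounds[OF \<open>0 < \<alpha>\<close>])

end
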